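(* For any integer $d\ge1$, the number of partial orders on $\{1,\dots,n\}$ of dimension at most $d$ equals $n^{(d+o(1))n}$.
   Context: The dimension of a partial order $\prec$ on $\{1,\dots,n\}$ is the minimum integer $d$ such that there are points $a_1,\dots,a_n\in\mathbb{R}^d$, $a_i=(a_i^{(1)},\dots,a_i^{(d)})$, with $a_i^{(\ell)}\neq a_j^{(\ell)}$ for all distinct $i,j$ and all $\ell$, and such that for distinct $i,j$ we have $i\prec j$ iff $a_i^{(\ell)}\le a_j^{(\ell)}$ for all $\ell=1,\dots,d$. "Equals $n^{(c+o(1))n}$" means equals $n^{(c+\varepsilon(n))n}$ for some function $\varepsilon(n)\to0$ as $n\to\infty$ (for fixed $d$). *)

theory Defs
  imports Complex_Main
begin

definition realizable_in :: "nat \<Rightarrow> (nat \<times> nat) set \<Rightarrow> nat \<Rightarrow> bool" where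
  "realizable_in n R d \<longleftrightarrow>
     (\<exists>a :: nat \<Rightarrow> nat \<Rightarrow> real.
        (\<forall>l<d. inj_on (\<lambda>i. a i l) {1..n}) \<and>
        (\<forall>i\<in>{1..n}. \<forall>j\<in>{1..n}. i \<noteq> j \<longrightarrow>
            ((i, j) \<in> R \<longleftrightarrow> (\<forall>l<d. a i l \<le> a j l))))"

definition order_dim :: "nat \<Rightarrow> (nat \<times> nat) set \<Rightarrow> nat" where
  "order_dim n R = (LEAST d. realizable_in n R d)"

definition num_orders_dim_le :: "nat \<Rightarrow> nat \<Rightarrow> nat" where
  "num_orders_dim_le d n =
     card {R. partial_order_on {1..n} R \<and> order_dim n R \<le> d}"

end

(* A partial order of dimension at most d on {1..n} is the dominance order of d injective
   coordinates, and replacing each coordinate by its rank shows that it is determined by d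
   permutations of {1..n}; hence there are at most n^(dn) of them. Conversely, take k free
   points with arbitrary coordinate vectors in {0..<m}^d and, for each coordinate l, a chain of
   m threshold points that sit at heights 0, ..., m-1 in coordinate l and on top in all other
   coordinates. Whether a free point lies below a threshold point reads off one entry of its
   vector, so these m^(dk) orders are distinct. With m ~ n / ln n and k = n - dm this gives
   n^((d - o(1)) n) orders. *)

theory Submission
  imports Defs "HOL-Library.FuncSet" "HOL-Library.Product_Lexorder" "HOL-Real_Asymp.Real_Asymp"
begin

definition rank_in :: "'a set \<Rightarrow> ('a \<Rightarrow> 'b::linorder) \<Rightarrow> 'a \<Rightarrow> nat" where
  "rank_in A f x = card {y\<in>A. f y \<le> f x}"

lemma rank_in_le_iff:
  assumes "finite A" "x \<in> A" "y \<in> A"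
  shows "rank_in A f x \<le> rank_in A f y \<longleftrightarrow> f x \<le> f y"
proof
  assume "f x \<le> f y"
  then show "rank_in A f x \<le> rank_in A f y"
    unfolding rank_in_def using assms by (intro card_mono) auto
next
  assume "rank_in A f x \<le> rank_in A f y"
  moreover have "rank_in A f y < rank_in A f x" if "f y < f x"
  proof -
    have "{z\<in>A. f z \<le> f y} \<subseteq> {z\<in>A. f z \<le> f x}" "x \<notin> {z\<in>A. f z \<le> f y}"
      using that by (auto intro: order_trans less_imp_le)
    with \<open>x \<in> A\<close> have "{z\<in>A. f z \<le> f y} \<subset> {z\<in>A. f z \<le> f x}" by blast
    then show ?thesis unfolding rank_in_def using assms by (intro psubset_card_mono) auto
  qed
  ultimately show "f x \<le> f y" by (meson not_le)
qed

lemma rank_in_mem: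
  assumes "finite A" "x \<in> A"
  shows "rank_in A f x \<in> {1..card A}"
proof -
  have "rank_in A f x \<le> card A" unfolding rank_in_def using assms by (intro card_mono) auto
  moreover have "x \<in> {y\<in>A. f y \<le> f x}" using assms by simp
  then have "0 < rank_in A f x" unfolding rank_in_def using assms by (auto simp: card_gt_0_iff)
  ultimately show ?thesis by simp
qed

definition dominance_order :: "nat \<Rightarrow> nat \<Rightarrow> (nat \<Rightarrow> nat \<Rightarrow> 'a::order) \<Rightarrow> (nat \<times> nat) set" where
  "dominance_order n d a =
     {(i, j). i \<in> {1..n} \<and> j \<in> {1..n} \<and> (i = j \<or> (\<forall>l<d. a i l \<le> a j l))}"

lemma dominance_order_cong:
  assumes "\<And>i j l. i \<in> {1..n} \<Longrightarrow> j \<in> {1..n} \<Longrightarrow> l < d \<Longrightarrow> a i l \<le> a j l \<longleftrightarrow> b i l \<le> b j l"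
  shows "dominance_order n d a = dominance_order n d b"
  unfolding dominance_order_def using assms by blast

lemma dominance_order_rank_in:
  "dominance_order n d a = dominance_order n d (\<lambda>i l. rank_in {1..n} (\<lambda>j. a j l) i)"
  by (rule dominance_order_cong) (simp add: rank_in_le_iff)

lemma partial_order_on_dominance_order:
  assumes "0 < d" and inj: "inj_on (\<lambda>i. a i 0) {1..n}"
  shows "partial_order_on {1..n} (dominance_order n d a)"
  unfolding partial_order_on_def preorder_on_def
proof (intro conjI)
  show "dominance_order n d a \<subseteq> {1..n} \<times> {1..n}" "refl_on {1..n} (dominance_order n d a)"
    unfolding dominance_order_def refl_on_def by auto
  show "trans (dominance_order n d a)"
  proof (rule transI)
    fix i j k assume "(i, j) \<in> dominance_order n d a" "(j, k) \<in> dominance_order n d a"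
    then show "(i, k) \<in> dominance_order n d a"
      unfolding dominance_order_def by (smt (verit) case_prodD case_prodI mem_Collect_eq order_trans)
  qed
  show "antisym (dominance_order n d a)"
  proof (rule antisymI)
    fix i j assume "(i, j) \<in> dominance_order n d a" "(j, i) \<in> dominance_order n d a"
    then have "i \<in> {1..n}" "j \<in> {1..n}" "i = j \<or> a i 0 = a j 0"
      using \<open>0 < d\<close> unfolding dominance_order_def by (auto intro: order_antisym)
    then show "i = j" using inj_onD[OF inj] by blast
  qed
qed

lemma realizable_in_dominance_order:
  fixes a :: "nat \<Rightarrow> nat \<Rightarrow> 'a::linorder"
  assumes inj: "\<forall>l<d. inj_on (\<lambda>i. a i l) {1..n}"
  shows "realizable_in n (dominance_order n d a) d"
proof -
  define r where "r i l = real (rank_in {1..n} (\<lambda>j. a j l) i)" for i l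
  have r_le_iff: "r i l \<le> r j l \<longleftrightarrow> a i l \<le> a j l" if "i \<in> {1..n}" "j \<in> {1..n}" for i j l
    unfolding r_def using that by (simp add: rank_in_le_iff)
  have "inj_on (\<lambda>i. r i l) {1..n}" if "l < d" for l
  proof (rule inj_onI)
    fix i j assume ij: "i \<in> {1..n}" "j \<in> {1..n}" "r i l = r j l"
    then have "a i l = a j l" using r_le_iff[of i j l] r_le_iff[of j i l] by auto
    then show "i = j" using inj_onD[OF inj[rule_format, OF that]] ij by blast
  qed
  then show ?thesis
    unfolding realizable_in_def dominance_order_def using r_le_iff by (intro exI[of _ r]) auto
qed

lemma realizable_in_imp_dominance_order:
  assumes "partial_order_on {1..n} R" "realizable_in n R d"
  shows "\<exists>a :: nat \<Rightarrow> nat \<Rightarrow> real. (\<forall>l<d. inj_on (\<lambda>i. a i l) {1..n}) \<and> R = dominance_order n d a"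
proof -
  obtain a :: "nat \<Rightarrow> nat \<Rightarrow> real" where inj: "\<forall>l<d. inj_on (\<lambda>i. a i l) {1..n}"
    and a: "\<forall>i\<in>{1..n}. \<forall>j\<in>{1..n}. i \<noteq> j \<longrightarrow> ((i, j) \<in> R \<longleftrightarrow> (\<forall>l<d. a i l \<le> a j l))"
    using assms(2) unfolding realizable_in_def by blast
  have "R \<subseteq> {1..n} \<times> {1..n}" "refl_on {1..n} R" using partial_order_onD[OF assms(1)] by auto
  with a have "R = dominance_order n d a"
    unfolding dominance_order_def refl_on_def by fastforce
  with inj show ?thesis by blast
qed

lemma partial_order_on_realizable_in:
  assumes po: "partial_order_on {1..n} R"
  shows "realizable_in n R n"
proof -
  have sub: "R \<subseteq> {1..n} \<times> {1..n}" and refl: "refl_on {1..n} R" and trans: "trans R"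
    and antisym: "antisym R"
    using partial_order_onD[OF po] by auto
  define h where "h x = card {y\<in>{1..n}. (y, x) \<in> R \<and> y \<noteq> x}" for x
  have h_less: "h x < h y" if "(x, y) \<in> R" "x \<noteq> y" for x y
  proof -
    have "{z\<in>{1..n}. (z, x) \<in> R \<and> z \<noteq> x} \<subseteq> {z\<in>{1..n}. (z, y) \<in> R \<and> z \<noteq> y}"
      using that trans antisym by (auto dest: transD antisymD)
    moreover have "x \<in> {z\<in>{1..n}. (z, y) \<in> R \<and> z \<noteq> y}" using that sub by auto
    ultimately have "{z\<in>{1..n}. (z, x) \<in> R \<and> z \<noteq> x} \<subset> {z\<in>{1..n}. (z, y) \<in> R \<and> z \<noteq> y}"
      by blast
    then show ?thesis unfolding h_def by (intro psubset_card_mono) auto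
  qed
  \<comment> \<open>Lexicographically, coordinate l puts the down-set of l + 1 first and orders both blocks
    by the linear extension h.\<close>
  define c where "c x l = ((x, l + 1) \<notin> R, h x, x)" for x l
  have "R = dominance_order n n c"
  proof (rule set_eqI, clarify)
    fix i j
    show "(i, j) \<in> R \<longleftrightarrow> (i, j) \<in> dominance_order n n c"
    proof (cases "i \<in> {1..n} \<and> j \<in> {1..n} \<and> i \<noteq> j")
      case True
      have "c i l \<le> c j l" if "(i, j) \<in> R" "l < n" for l
        using h_less[OF that(1)] True transD[OF trans that(1)] unfolding c_def by auto
      moreover have "(i, j) \<in> R" if "\<forall>l<n. c i l \<le> c j l"
        using that[rule_format, of "j - 1"] True refl unfolding c_def refl_on_def by auto
      ultimately show ?thesis using True unfolding dominance_order_def by blast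
    next
      case False
      then show ?thesis using sub refl unfolding dominance_order_def refl_on_def by auto
    qed
  qed
  moreover have "\<forall>l<n. inj_on (\<lambda>i. c i l) {1..n}" unfolding c_def by (simp add: inj_on_def)
  ultimately show ?thesis using realizable_in_dominance_order by metis
qed

lemma dominance_order_subsingleton:
  assumes "n \<le> 1"
  shows "dominance_order n d a = dominance_order n d' a'"
  using assms unfolding dominance_order_def by auto

lemma realizable_in_mono:
  assumes po: "partial_order_on {1..n} R" and "realizable_in n R d'" "d' \<le> d" "0 < d"
  shows "realizable_in n R d"
proof -
  obtain a :: "nat \<Rightarrow> nat \<Rightarrow> real" where inj: "\<forall>l<d'. inj_on (\<lambda>i. a i l) {1..n}"
    and R: "R = dominance_order n d' a"
    using realizable_in_imp_dominance_order[OF assms(1,2)] by blast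
  show ?thesis
  proof (cases "d' = 0")
    case True
    have "n \<le> 1"
    proof (rule ccontr)
      assume "\<not> n \<le> 1"
      then have "(1, 2) \<in> R" "(2, 1) \<in> R" using R True unfolding dominance_order_def by auto
      then show False using partial_order_onD(3)[OF po] by (auto dest: antisymD)
    qed
    then have "R = dominance_order n d (\<lambda>i l. i)" using R dominance_order_subsingleton by blast
    then show ?thesis using realizable_in_dominance_order[of d "\<lambda>i l. i"] by simp
  next
    case False
    define a' where "a' i l = a i (min l (d' - 1))" for i l
    have "(\<forall>l<d. a' i l \<le> a' j l) \<longleftrightarrow> (\<forall>l<d'. a i l \<le> a j l)" for i j
    proof
      assume H: "\<forall>l<d. a' i l \<le> a' j l"
      show "\<forall>l<d'. a i l \<le> a j l"
      proof (intro allI impI)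
        fix l assume "l < d'"
        then have "l < d" "min l (d' - 1) = l" using \<open>d' \<le> d\<close> by auto
        then show "a i l \<le> a j l" using H unfolding a'_def by metis
      qed
    qed (use False in \<open>simp add: a'_def\<close>)
    then have "R = dominance_order n d a'" unfolding R dominance_order_def by simp
    moreover have "\<forall>l<d. inj_on (\<lambda>i. a' i l) {1..n}" unfolding a'_def using inj False by simp
    ultimately show ?thesis using realizable_in_dominance_order by metis
  qed
qed

lemma realizable_in_if_order_dim_le:
  assumes "partial_order_on {1..n} R" "order_dim n R \<le> d" "0 < d"
  shows "realizable_in n R d"
proof -
  have "realizable_in n R (order_dim n R)"
    unfolding order_dim_def using partial_order_on_realizable_in[OF assms(1)] by (rule LeastI)
  then show ?thesis using realizable_in_mono assms by blast
qed

lemma num_orders_dim_le_upper: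
  assumes "0 < d"
  shows "num_orders_dim_le d n \<le> n ^ (n * d)"
proof -
  let ?P = "{..<d} \<rightarrow>\<^sub>E {1..n} \<rightarrow>\<^sub>E {1..n}"
  define ord where "ord r = dominance_order n d (\<lambda>i l. r l i)" for r :: "nat \<Rightarrow> nat \<Rightarrow> nat"
  have "{R. partial_order_on {1..n} R \<and> order_dim n R \<le> d} \<subseteq> ord ` ?P"
  proof clarify
    fix R assume R: "partial_order_on {1..n} R" "order_dim n R \<le> d"
    then obtain a :: "nat \<Rightarrow> nat \<Rightarrow> real" where "R = dominance_order n d a"
      using realizable_in_imp_dominance_order realizable_in_if_order_dim_le assms by metis
    also have "\<dots> = dominance_order n d (\<lambda>i l. rank_in {1..n} (\<lambda>j. a j l) i)"
      by (rule dominance_order_rank_in)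
    also have "\<dots> = ord (\<lambda>l\<in>{..<d}. \<lambda>i\<in>{1..n}. rank_in {1..n} (\<lambda>j. a j l) i)"
      unfolding ord_def by (rule dominance_order_cong) simp
    moreover have "(\<lambda>l\<in>{..<d}. \<lambda>i\<in>{1..n}. rank_in {1..n} (\<lambda>j. a j l) i) \<in> ?P"
    proof -
      have "rank_in {1..n} f i \<in> {1..n}" if "i \<in> {1..n}" for f and i :: nat
        using rank_in_mem[of "{1..n}" i f] that by simp
      then show ?thesis unfolding restrict_PiE_iff Pi_iff by blast
    qed
    ultimately show "R \<in> ord ` ?P" by blast
  qed
  then have "num_orders_dim_le d n \<le> card (ord ` ?P)"
    unfolding num_orders_dim_le_def by (intro card_mono finite_imageI) (auto simp: finite_PiE)
  also have "\<dots> \<le> card ?P" by (intro card_image_le) (simp add: finite_PiE)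
  also have "\<dots> = n ^ (n * d)" by (simp add: card_PiE power_mult)
  finally show ?thesis .
qed

text \<open>Point p + 1 (p < k) is free with coordinate vector b p, point k + 1 + l * m + t is the
  threshold at height t of coordinate l, and all remaining points lie on top. The second
  component breaks ties by index, so every coordinate is injective.\<close>

definition threshold_coords :: "nat \<Rightarrow> nat \<Rightarrow> (nat \<Rightarrow> nat \<Rightarrow> nat) \<Rightarrow> nat \<Rightarrow> nat \<Rightarrow> nat \<times> nat" where
  "threshold_coords k m b i l =
     (if i \<le> k then b (i - 1) l else if (i - k - 1) div m = l then (i - k - 1) mod m else m, i)"

lemma threshold_order_mem_iff:
  assumes b: "\<forall>p<k. \<forall>l<d. b p l < m" and "k + d * m \<le> n" "p < k" "l < d" "t < m"
  shows "(p + 1, k + 1 + l * m + t) \<in> dominance_order n d (threshold_coords k m b) \<longleftrightarrow> b p l \<le> t"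
proof -
  define q where "q = k + 1 + l * m + t"
  have "l * m + m \<le> d * m" using \<open>l < d\<close> by (metis Suc_leI add.commute mult_Suc mult_le_mono1)
  then have q: "q \<in> {1..n}" "k < q" using assms unfolding q_def by auto
  have q_div_mod: "(q - k - 1) div m = l" "(q - k - 1) mod m = t" unfolding q_def using \<open>t < m\<close> by auto
  have "p + 1 \<in> {1..n}" "p + 1 < q" using assms q unfolding q_def by auto
  moreover have "threshold_coords k m b (p + 1) l' \<le> threshold_coords k m b q l'"
    if "l' < d" "l' \<noteq> l" for l'
    using that q q_div_mod b \<open>p < k\<close> unfolding threshold_coords_def by auto
  moreover have "threshold_coords k m b (p + 1) l \<le> threshold_coords k m b q l \<longleftrightarrow> b p l \<le> t"
    using q q_div_mod \<open>p + 1 < q\<close> \<open>p < k\<close> unfolding threshold_coords_def by auto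
  ultimately show ?thesis
    using \<open>l < d\<close> q(1) unfolding dominance_order_def q_def[symmetric] by auto
qed

lemma num_orders_dim_le_lower:
  assumes "k + d * m \<le> n" "0 < d"
  shows "m ^ (d * k) \<le> num_orders_dim_le d n"
proof -
  let ?B = "{..<k} \<rightarrow>\<^sub>E {..<d} \<rightarrow>\<^sub>E {..<m}"
  let ?S = "{R. partial_order_on {1..n} R \<and> order_dim n R \<le> d}"
  define ord where "ord b = dominance_order n d (threshold_coords k m b)" for b
  have bounded: "\<forall>p<k. \<forall>l<d. b p l < m" if "b \<in> ?B" for b
    using that by (auto simp: PiE_iff)
  have ord_mem: "ord b \<in> ?S" for b
  proof -
    have inj: "\<forall>l<d. inj_on (\<lambda>i. threshold_coords k m b i l) {1..n}"
      by (auto simp: threshold_coords_def inj_on_def)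
    then have "realizable_in n (ord b) d"
      unfolding ord_def by (rule realizable_in_dominance_order)
    then have "order_dim n (ord b) \<le> d" unfolding order_dim_def by (rule Least_le)
    moreover have "partial_order_on {1..n} (ord b)"
      unfolding ord_def using inj assms(2) by (intro partial_order_on_dominance_order) auto
    ultimately show ?thesis by blast
  qed
  have "inj_on ord ?B"
  proof (rule inj_onI)
    fix b b' assume bb': "b \<in> ?B" "b' \<in> ?B" "ord b = ord b'"
    have same: "b p l = b' p l" if "p < k" "l < d" for p l
    proof -
      have mem_iff: "(p + 1, k + 1 + l * m + t) \<in> ord c \<longleftrightarrow> c p l \<le> t" if "c \<in> ?B" "t < m" for c t
        unfolding ord_def using threshold_order_mem_iff[OF bounded[OF that(1)] assms(1)] that
          \<open>p < k\<close> \<open>l < d\<close> by blast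
      have "b p l < m" "b' p l < m" using bounded bb'(1,2) that by blast+
      then show ?thesis using mem_iff[OF bb'(1)] mem_iff[OF bb'(2)] bb'(3) by (metis le_antisym le_refl)
    qed
    show "b = b'"
    proof (rule PiE_ext[OF bb'(1,2)])
      fix p assume "p \<in> {..<k}"
      then show "b p = b' p"
        using bb'(1,2) same by (intro PiE_ext[of _ "{..<d}" "\<lambda>_. {..<m}"]) auto
    qed
  qed
  moreover have "ord ` ?B \<subseteq> ?S" using ord_mem by blast
  moreover have "finite ?S" by (rule finite_subset[of _ "Pow ({1..n} \<times> {1..n})"])
    (auto dest: partial_order_onD(4))
  ultimately have "card ?B \<le> card ?S" by (intro card_inj_on_le)
  then show ?thesis unfolding num_orders_dim_le_def by (simp add: card_PiE power_mult)
qed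

lemma num_orders_dim_le_pos: "0 < d \<Longrightarrow> 0 < num_orders_dim_le d n"
  using num_orders_dim_le_lower[of 0 d 0 n] by simp

lemma ln_num_orders_dim_le_upper:
  assumes "0 < d" "2 \<le> n"
  shows "ln (real (num_orders_dim_le d n)) / (real n * ln (real n)) \<le> real d"
proof -
  have "ln (real (num_orders_dim_le d n)) \<le> ln (real n ^ (n * d))"
    using num_orders_dim_le_upper[OF assms(1), of n] num_orders_dim_le_pos[OF assms(1), of n]
    by (subst ln_le_cancel_iff) (auto simp flip: of_nat_power)
  also have "\<dots> = real d * (real n * ln (real n))" using assms by (simp add: ln_realpow)
  finally show ?thesis using assms by (simp add: divide_le_eq)
qed

lemma ln_num_orders_dim_le_lower:
  assumes "0 < d" "k + d * m \<le> n" "0 < m"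
  shows "real d * real k * ln (real m) \<le> ln (real (num_orders_dim_le d n))"
proof -
  have "ln (real (m ^ (d * k))) \<le> ln (real (num_orders_dim_le d n))"
    using num_orders_dim_le_lower[OF assms(2,1)] num_orders_dim_le_pos[OF assms(1)] assms(3)
    by (subst ln_le_cancel_iff) auto
  then show ?thesis using assms(3) by (simp add: ln_realpow)
qed

lemma ln_num_orders_dim_le_lower_asymp:
  assumes "0 < d" and two_le: "2 \<le> real n / ln (real n)" and d_le: "real d \<le> ln (real n)"
  shows "real d * (1 - real d / ln (real n)) * (ln (real n / ln (real n) - 1) / ln (real n))
         \<le> ln (real (num_orders_dim_le d n)) / (real n * ln (real n))"
proof -
  define L where "L = ln (real n)"
  define X where "X = real n / L"
  define m where "m = nat \<lfloor>X\<rfloor>"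
  define k where "k = n - d * m"
  have L_pos: "0 < L" using d_le assms(1) unfolding L_def by linarith
  have m: "X - 1 \<le> real m" "real m \<le> X" "0 < m" using two_le unfolding m_def X_def L_def by linarith+
  have "real d * X \<le> real n"
    using d_le L_pos mult_left_mono[OF d_le, of "real n"] unfolding X_def L_def by (simp add: field_simps)
  moreover have dm_le: "real d * real m \<le> real d * X" using m(2) by (simp add: mult_left_mono)
  ultimately have "d * m \<le> n" by (metis of_nat_le_iff of_nat_mult order_trans)
  then have "k + d * m \<le> n" "real k = real n - real d * real m" unfolding k_def by (auto simp: of_nat_diff)
  moreover have "real n * (1 - real d / L) = real n - real d * X"
    using L_pos unfolding X_def by (simp add: field_simps)
  ultimately have k: "real n * (1 - real d / L) \<le> real k" using dm_le by linarith
  have "real d * (real n * (1 - real d / L)) * ln (X - 1) \<le> real d * real k * ln (real m)"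
  proof -
    have "ln (X - 1) \<le> ln (real m)" "0 \<le> ln (X - 1)"
      using m two_le unfolding X_def L_def by auto
    then show ?thesis using k by (intro mult_mono mult_left_mono) auto
  qed
  also have "\<dots> \<le> ln (real (num_orders_dim_le d n))"
    by (rule ln_num_orders_dim_le_lower) (use assms \<open>k + d * m \<le> n\<close> m in auto)
  finally have ln_ge: "real d * (real n * (1 - real d / L)) * ln (X - 1)
    \<le> ln (real (num_orders_dim_le d n))" .
  have n_pos: "0 < real n" using two_le L_pos unfolding X_def L_def by (auto simp: field_simps)
  have "real d * (1 - real d / L) * (ln (X - 1) / L)
      = real d * (real n * (1 - real d / L)) * ln (X - 1) / (real n * L)"
    using n_pos L_pos by (simp add: field_simps)
  also have "\<dots> \<le> ln (real (num_orders_dim_le d n)) / (real n * L)"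
    using ln_ge n_pos L_pos by (intro divide_right_mono) auto
  finally show ?thesis unfolding L_def X_def .
qed

lemma ln_num_orders_dim_le_tendsto:
  assumes "0 < d"
  shows "(\<lambda>n. ln (real (num_orders_dim_le d n)) / (real n * ln (real n))) \<longlonglongrightarrow> real d"
proof (rule tendsto_sandwich[OF _ _ _ tendsto_const])
  let ?g = "\<lambda>n::nat. real d * (1 - real d / ln (real n)) * (ln (real n / ln (real n) - 1) / ln (real n))"
  show "?g \<longlonglongrightarrow> real d" by real_asymp
  have "eventually (\<lambda>n::nat. 2 \<le> real n / ln (real n)) sequentially" by real_asymp
  moreover have "eventually (\<lambda>n::nat. real d \<le> ln (real n)) sequentially" by real_asymp
  ultimately show "eventually (\<lambda>n. ?g n \<le> ln (real (num_orders_dim_le d n)) / (real n * ln (real n))) sequentially"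
    by eventually_elim (rule ln_num_orders_dim_le_lower_asymp[OF assms])
  show "eventually (\<lambda>n. ln (real (num_orders_dim_le d n)) / (real n * ln (real n)) \<le> real d) sequentially"
    using eventually_ge_at_top[of 2] by eventually_elim (rule ln_num_orders_dim_le_upper[OF assms])
qed

lemma powr_exponent_tendsto:
  fixes f :: "nat \<Rightarrow> real"
  assumes "f 1 = 1" "\<And>n. 2 \<le> n \<Longrightarrow> 0 < f n"
    and "(\<lambda>n. ln (f n) / (real n * ln (real n))) \<longlonglongrightarrow> c"
  shows "\<exists>\<epsilon>. \<epsilon> \<longlonglongrightarrow> 0 \<and> (\<forall>n\<ge>1. f n = real n powr ((c + \<epsilon> n) * real n))"
proof (intro exI conjI allI impI)
  define \<epsilon> where "\<epsilon> n = ln (f n) / (real n * ln (real n)) - c" for n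
  show "\<epsilon> \<longlonglongrightarrow> 0" unfolding \<epsilon>_def using tendsto_diff[OF assms(3) tendsto_const, of c] by simp
  fix n :: nat assume "1 \<le> n"
  show "f n = real n powr ((c + \<epsilon> n) * real n)"
  proof (cases "n = 1")
    case False
    then have "real n \<noteq> 0" "ln (real n) \<noteq> 0" using \<open>1 \<le> n\<close> by auto
    then have "(c + \<epsilon> n) * real n * ln (real n) = ln (f n)" unfolding \<epsilon>_def by (simp add: field_simps)
    then show ?thesis using False \<open>1 \<le> n\<close> assms(2)[of n] by (simp add: powr_def)
  qed (use assms(1) in simp)
qed

theorem corollary2p15:
  fixes d :: nat
  assumes "d \<ge> 1"
  shows "\<exists>\<epsilon> :: nat \<Rightarrow> real. \<epsilon> \<longlonglongrightarrow> 0 \<and>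
           (\<forall>n\<ge>1. real (num_orders_dim_le d n) = real n powr ((real d + \<epsilon> n) * real n))"
proof (rule powr_exponent_tendsto)
  have "0 < d" using assms by simp
  have "num_orders_dim_le d 1 \<le> 1" using num_orders_dim_le_upper[OF \<open>0 < d\<close>, of 1] by simp
  then show "real (num_orders_dim_le d 1) = 1" using num_orders_dim_le_pos[OF \<open>0 < d\<close>, of 1] by simp
  show "0 < real (num_orders_dim_le d n)" for n using num_orders_dim_le_pos[OF \<open>0 < d\<close>] by simp
  show "(\<lambda>n. ln (real (num_orders_dim_le d n)) / (real n * ln (real n))) \<longlonglongrightarrow> real d"
    using ln_num_orders_dim_le_tendsto[OF \<open>0 < d\<close>] .
qed

end
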